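(* Let $\mathsf G=(\mathsf V,\mathsf E)$ be a finite connected graph without loops or multiple edges, with discrete Laplacian $\mathcal L=\mathcal I\mathcal I^T$. Then the semigroup $(e^{-t\mathcal L^2})_{t\ge0}$ is eventually irreducible: there exists $t_0>0$ such that for all $t\ge t_0$ and all $f\in\mathbb R^V$ with $f\ge0$, $f\ne0$, every entry of $e^{-t\mathcal L^2}f$ is strictly positive.
   Context: $V=|\mathsf V|$. After fixing an arbitrary orientation of the edges, the incidence matrix $\mathcal I\in\mathbb R^{V\times E}$ has entries $\iota_{\mathsf v\mathsf e}=-1$ if $\mathsf v$ is the initial endpoint of $\mathsf e$, $+1$ if $\mathsf v$ is the terminal endpoint of $\mathsf e$, and $0$ otherwise; $\mathcal L=\mathcal I\mathcal I^T$. *)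

theory Defs
  imports "HOL-Analysis.Analysis"
begin

text \<open>Finite simple graph on the vertex type 'v: edges are 2-element vertex sets
  (so no loops and no multiple edges).\<close>
definition simple_graph :: "'v set set \<Rightarrow> bool" where
  "simple_graph E \<longleftrightarrow> (\<forall>e\<in>E. card e = 2)"

definition graph_connected :: "'v set set \<Rightarrow> bool" where
  "graph_connected E \<longleftrightarrow> (\<forall>u w. (\<lambda>x y. {x, y} \<in> E)\<^sup>*\<^sup>* u w)"

definition orientation :: "'v set set \<Rightarrow> ('v set \<Rightarrow> 'v) \<Rightarrow> ('v set \<Rightarrow> 'v) \<Rightarrow> bool" where
  "orientation E ini ter \<longleftrightarrow> (\<forall>e\<in>E. e = {ini e, ter e})"

definition incidence :: "('v set \<Rightarrow> 'v) \<Rightarrow> ('v set \<Rightarrow> 'v) \<Rightarrow> 'v \<Rightarrow> 'v set \<Rightarrow> real" where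
  "incidence ini ter v e = (if v = ini e then -1 else if v = ter e then 1 else 0)"

definition laplacian :: "'v set set \<Rightarrow> ('v set \<Rightarrow> 'v) \<Rightarrow> ('v set \<Rightarrow> 'v) \<Rightarrow> real ^ 'v ^ 'v" where
  "laplacian E ini ter = (\<chi> u w. \<Sum>e\<in>E. incidence ini ter u e * incidence ini ter w e)"

primrec matpow :: "real ^ 'n ^ 'n \<Rightarrow> nat \<Rightarrow> real ^ 'n ^ 'n" where
  "matpow A 0 = mat 1"
| "matpow A (Suc k) = A ** matpow A k"

definition mexp :: "real ^ 'n ^ 'n \<Rightarrow> real ^ 'n ^ 'n" where
  "mexp A = (\<Sum>k. (1 / fact k) *\<^sub>R matpow A k)"

end

theory Submission
  imports Defs
begin

text \<open>The Laplacian L is symmetric, so it has an orthonormal eigenbasis B with eigenvalues \<mu>,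
  and the (i,j) entry of exp(-t L^2) is the sum over b in B of b_i b_j exp(-t \<mu>(b)^2). As
  t tends to infinity only the terms with \<mu>(b) = 0 survive. Since x \<bullet> L x is the sum over
  the edges e of (x_(ter e) - x_(ini e))^2, on a connected graph the kernel of L consists of
  the constant vectors; so every surviving term b_i b_j = b_i^2 is nonnegative, and it is
  positive for the kernel eigenvectors, which exist because L 1 = 0. Hence all entries of
  exp(-t L^2) are positive for large t, and a positive matrix maps nonnegative nonzero vectors
  to positive ones.\<close>

definition orthonormal_eigenbasis ::
    "real^'n^'n \<Rightarrow> (real^'n) set \<Rightarrow> (real^'n \<Rightarrow> real) \<Rightarrow> bool" where
  "orthonormal_eigenbasis A B \<mu> \<longleftrightarrow> finite B \<and> pairwise orthogonal B \<and> span B = UNIV \<and>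
     (\<forall>b\<in>B. norm b = 1 \<and> A *v b = \<mu> b *\<^sub>R b)"

lemma inner_sum_orthonormal:
  assumes "finite B" "pairwise orthogonal B" "\<And>b. b \<in> B \<Longrightarrow> norm b = 1" "b' \<in> B"
  shows "(\<Sum>b\<in>B. c b *\<^sub>R b) \<bullet> b' = c b'"
proof -
  have "(\<Sum>b\<in>B. c b *\<^sub>R b) \<bullet> b' = (\<Sum>b\<in>B. if b = b' then c b' else 0)"
  proof (unfold inner_sum_left, intro sum.cong refl)
    fix b assume "b \<in> B"
    show "(c b *\<^sub>R b) \<bullet> b' = (if b = b' then c b' else 0)"
      using assms(2-4) \<open>b \<in> B\<close> by (auto simp: pairwise_def orthogonal_def dot_square_norm)
  qed
  also have "\<dots> = c b'" using assms(1,4) by (simp add: sum.delta')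
  finally show ?thesis .
qed

lemma orthonormal_eigenbasis_expand:
  assumes "orthonormal_eigenbasis A B \<mu>"
  shows "(\<Sum>b\<in>B. (x \<bullet> b) *\<^sub>R b) = x"
  using assms unfolding orthonormal_eigenbasis_def by (intro orthonormal_basis_expand) auto

lemma orthonormal_eigenbasis_kernel:
  assumes basis: "orthonormal_eigenbasis A B \<mu>" and "A *v x = 0" and "x \<noteq> 0"
  shows "\<exists>b\<in>B. \<mu> b = 0"
proof (rule ccontr)
  assume no_zero: "\<not> ?thesis"
  have unit: "\<And>b. b \<in> B \<Longrightarrow> norm b = 1" and fin: "finite B" and orth: "pairwise orthogonal B"
    using basis unfolding orthonormal_eigenbasis_def by auto
  have "(\<Sum>b\<in>B. ((x \<bullet> b) * \<mu> b) *\<^sub>R b) = A *v (\<Sum>b\<in>B. (x \<bullet> b) *\<^sub>R b)"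
    using basis by (simp add: orthonormal_eigenbasis_def vec.sum matrix_vector_mult_scaleR)
  also have "\<dots> = 0" using \<open>A *v x = 0\<close> orthonormal_eigenbasis_expand[OF basis] by simp
  finally have "(x \<bullet> b) * \<mu> b = 0" if "b \<in> B" for b
    using inner_sum_orthonormal[OF fin orth unit that, of "\<lambda>b. (x \<bullet> b) * \<mu> b"] by simp
  hence "(\<Sum>b\<in>B. (x \<bullet> b) *\<^sub>R b) = 0" using no_zero by simp
  with \<open>x \<noteq> 0\<close> show False using orthonormal_eigenbasis_expand[OF basis] by simp
qed

lemma orthonormal_eigenbasis_scaled_square:
  assumes "orthonormal_eigenbasis A B \<mu>"
  shows "orthonormal_eigenbasis (c *\<^sub>R (A ** A)) B (\<lambda>b. c * (\<mu> b)\<^sup>2)"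
  using assms unfolding orthonormal_eigenbasis_def
  by (auto simp: scaleR_matrix_vector_assoc[symmetric] matrix_vector_mul_assoc[symmetric]
      matrix_vector_mult_scaleR power2_eq_square)

lemma symmetric_matrix_inner_commute:
  fixes A :: "real^'n^'n"
  assumes "transpose A = A"
  shows "(A *v x) \<bullet> y = x \<bullet> (A *v y)"
  by (metis assms dot_lmul_matrix inner_commute vector_transpose_matrix)

lemma nonpos_quadratic_linear_coeff_zero:
  fixes a c :: real
  assumes "\<And>s. 2 * s * a + s\<^sup>2 * c \<le> 0"
  shows "a = 0"
proof (rule ccontr)
  assume "a \<noteq> 0"
  define d where "d = \<bar>c\<bar> + 1"
  have d: "d > 0" "2 * d + c > 0" unfolding d_def by auto
  have "2 * (a / d) * a + (a / d)\<^sup>2 * c = (a / d)\<^sup>2 * (2 * d + c)"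
    using d by (simp add: power2_eq_square field_simps)
  also have "\<dots> > 0" using \<open>a \<noteq> 0\<close> d by simp
  finally show False using assms[of "a / d"] by simp
qed

text \<open>The Rayleigh quotient argument: a maximiser v of x \<bullet> A x on the unit sphere of S is an
  eigenvector, because the first variation of the quotient in every direction w of S
  orthogonal to v vanishes, which says w \<bullet> A v = 0.\<close>

lemma symmetric_invariant_subspace_eigenvector:
  fixes A :: "real^'n^'n"
  assumes sym: "transpose A = A" and S: "subspace S" and inv: "\<And>x. x \<in> S \<Longrightarrow> A *v x \<in> S"
    and "S \<noteq> {0}"
  shows "\<exists>v\<in>S. norm v = 1 \<and> A *v v = (v \<bullet> (A *v v)) *\<^sub>R v"
proof -
  let ?q = "\<lambda>x. x \<bullet> (A *v x)"
  define K where "K = S \<inter> sphere 0 1"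
  have "compact K" unfolding K_def
    by (rule closed_Int_compact[OF closed_subspace[OF S] compact_sphere])
  obtain x where x: "x \<in> S" "x \<noteq> 0" using \<open>S \<noteq> {0}\<close> S subspace_0 by blast
  have "x /\<^sub>R norm x \<in> K" unfolding K_def using x S by (simp add: subspace_scale)
  hence "K \<noteq> {}" by auto
  moreover have "continuous_on K ?q"
    by (intro continuous_intros linear_continuous_on) (auto intro: matrix_vector_mul_linear)
  ultimately obtain v where v: "v \<in> K" and vmax: "\<And>y. y \<in> K \<Longrightarrow> ?q y \<le> ?q v"
    using continuous_attains_sup[OF \<open>compact K\<close>] by blast
  define l where "l = ?q v"
  have vS: "v \<in> S" and nv: "norm v = 1" using v unfolding K_def by auto
  have vv: "v \<bullet> v = 1" using nv by (simp add: dot_square_norm)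
  have bound: "?q y \<le> l * (y \<bullet> y)" if "y \<in> S" for y
  proof (cases "y = 0")
    case False
    have "(1 / norm y) *\<^sub>R y \<in> K" unfolding K_def using that False S by (simp add: subspace_scale)
    hence "(1 / norm y)\<^sup>2 * ?q y \<le> l"
      using vmax unfolding l_def by (force simp: matrix_vector_mult_scaleR power2_eq_square)
    moreover have "(norm y)\<^sup>2 = y \<bullet> y" by (simp add: dot_square_norm)
    ultimately show ?thesis using False by (simp add: field_simps power2_eq_square)
  qed simp
  have orth: "w \<bullet> (A *v v) = 0" if "w \<in> S" "w \<bullet> v = 0" for w
  proof (rule nonpos_quadratic_linear_coeff_zero)
    fix s :: real
    have "v + s *\<^sub>R w \<in> S" using S vS that by (simp add: subspace_add subspace_scale)
    moreover have "v \<bullet> (A *v w) = w \<bullet> (A *v v)"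
      using symmetric_matrix_inner_commute[OF sym, of v w] by (simp add: inner_commute)
    ultimately have "l + 2 * s * (w \<bullet> (A *v v)) + s\<^sup>2 * ?q w \<le> l * (1 + s\<^sup>2 * (w \<bullet> w))"
      using bound[of "v + s *\<^sub>R w"] vv that(2)
      by (simp add: l_def matrix_vector_right_distrib matrix_vector_mult_scaleR inner_add_left
          inner_add_right power2_eq_square inner_commute algebra_simps)
    thus "2 * s * (w \<bullet> (A *v v)) + s\<^sup>2 * (?q w - l * (w \<bullet> w)) \<le> 0"
      by (simp add: algebra_simps)
  qed
  define w where "w = A *v v - l *\<^sub>R v"
  have wS: "w \<in> S" unfolding w_def using S inv[OF vS] vS by (simp add: subspace_diff subspace_scale)
  have wv: "w \<bullet> v = 0" unfolding w_def using vv
    by (simp add: inner_diff_left inner_diff_right l_def inner_commute)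
  have "w \<bullet> w = w \<bullet> (A *v v) - l * (w \<bullet> v)" unfolding w_def by (simp add: inner_diff_right)
  also have "\<dots> = 0" using orth[OF wS wv] wv by simp
  finally have "w = 0" by simp
  thus ?thesis using vS nv unfolding w_def l_def by auto
qed

lemma symmetric_invariant_subspace_eigenbasis:
  fixes A :: "real^'n^'n"
  assumes sym: "transpose A = A"
  shows "subspace S \<Longrightarrow> (\<And>x. x \<in> S \<Longrightarrow> A *v x \<in> S) \<Longrightarrow>
    \<exists>B \<mu>. B \<subseteq> S \<and> pairwise orthogonal B \<and> (\<forall>b\<in>B. norm b = 1 \<and> A *v b = \<mu> b *\<^sub>R b) \<and>
      S \<subseteq> span B"
proof (induction "dim S" arbitrary: S rule: less_induct)
  case (less S)
  show ?case
  proof (cases "S = {0}")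
    case True
    then show ?thesis by (intro exI[of _ "{}"]) auto
  next
    case False
    obtain v where vS: "v \<in> S" and nv: "norm v = 1" and ev: "A *v v = (v \<bullet> (A *v v)) *\<^sub>R v"
      using symmetric_invariant_subspace_eigenvector[OF sym less.prems False] by blast
    have vv: "v \<bullet> v = 1" using nv by (simp add: dot_square_norm)
    define S' where "S' = {x\<in>S. v \<bullet> x = 0}"
    have sub': "subspace S'" using less.prems(1) unfolding S'_def subspace_def
      by (auto simp: inner_add_right)
    have inv': "A *v x \<in> S'" if "x \<in> S'" for x
    proof -
      have "v \<bullet> (A *v x) = (v \<bullet> (A *v v)) * (v \<bullet> x)"
        by (metis ev inner_scaleR_left symmetric_matrix_inner_commute[OF sym])
      thus ?thesis using that less.prems(2) unfolding S'_def by auto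
    qed
    have "v \<notin> S'" using vv unfolding S'_def by auto
    hence "S' \<subset> S" using vS unfolding S'_def by blast
    hence "dim S' < dim S"
      using dim_psubset sub' less.prems(1) by (metis span_eq_iff)
    from less.hyps[OF this sub' inv'] obtain B \<mu> where
      B: "B \<subseteq> S'" "pairwise orthogonal B" "\<forall>b\<in>B. norm b = 1 \<and> A *v b = \<mu> b *\<^sub>R b"
        "S' \<subseteq> span B"
      by blast
    have "v \<notin> B" using B(1) \<open>v \<notin> S'\<close> by auto
    show ?thesis
    proof (intro exI[of _ "insert v B"] exI[of _ "\<mu>(v := v \<bullet> (A *v v))"] conjI)
      show "insert v B \<subseteq> S" using B(1) vS unfolding S'_def by auto
      show "pairwise orthogonal (insert v B)"
        using B(1,2) unfolding pairwise_insert S'_def by (auto simp: orthogonal_def inner_commute)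
      show "\<forall>b\<in>insert v B. norm b = 1 \<and> A *v b = (\<mu>(v := v \<bullet> (A *v v))) b *\<^sub>R b"
        using B(3) \<open>v \<notin> B\<close> nv ev by auto
      show "S \<subseteq> span (insert v B)"
      proof
        fix x assume "x \<in> S"
        hence "x - (v \<bullet> x) *\<^sub>R v \<in> span B"
          using B(4) vS vv less.prems(1) unfolding S'_def
          by (auto simp: subspace_diff subspace_scale inner_diff_right)
        hence "x - (v \<bullet> x) *\<^sub>R v + (v \<bullet> x) *\<^sub>R v \<in> span (insert v B)"
          by (meson span_add span_base span_mono span_scale insertI1 subset_insertI subsetD)
        thus "x \<in> span (insert v B)" by simp
      qed
    qed
  qed
qed

lemma symmetric_matrix_orthonormal_eigenbasis:
  fixes A :: "real^'n^'n"
  assumes "transpose A = A"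
  shows "\<exists>B \<mu>. orthonormal_eigenbasis A B \<mu>"
proof -
  obtain B \<mu> where B: "pairwise orthogonal B" "\<forall>b\<in>B. norm b = 1 \<and> A *v b = \<mu> b *\<^sub>R b"
    "UNIV \<subseteq> span B"
    using symmetric_invariant_subspace_eigenbasis[OF assms, of UNIV] by auto
  have "0 \<notin> B" using B(2) by force
  hence "finite B" using pairwise_orthogonal_independent[OF B(1)] finiteI_independent by blast
  with B show ?thesis unfolding orthonormal_eigenbasis_def by blast
qed

lemma matpow_eigenvector:
  assumes "A *v b = m *\<^sub>R b"
  shows "matpow A k *v b = (m ^ k) *\<^sub>R b"
  by (induction k) (simp_all add: matrix_vector_mul_assoc[symmetric] assms matrix_vector_mult_scaleR)

lemma matpow_entry_eigenbasis:
  assumes basis: "orthonormal_eigenbasis A B \<mu>"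
  shows "matpow A k $ i $ j = (\<Sum>b\<in>B. b $ i * b $ j * \<mu> b ^ k)"
proof -
  have "axis j 1 = (\<Sum>b\<in>B. (b $ j) *\<^sub>R b)"
    using orthonormal_eigenbasis_expand[OF basis, of "axis j 1"] by (simp add: inner_axis')
  moreover have "matpow A k *v b = (\<mu> b ^ k) *\<^sub>R b" if "b \<in> B" for b
    using basis that by (simp add: orthonormal_eigenbasis_def matpow_eigenvector)
  ultimately have "matpow A k *v axis j 1 = (\<Sum>b\<in>B. (b $ j * \<mu> b ^ k) *\<^sub>R b)"
    by (simp add: vec.sum matrix_vector_mult_scaleR)
  moreover have "matpow A k $ i $ j = (matpow A k *v axis j 1) $ i"
    by (simp add: matrix_vector_mult_basis column_def)
  ultimately show ?thesis by (simp add: algebra_simps)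
qed

lemma mexp_entry_eigenbasis:
  assumes basis: "orthonormal_eigenbasis A B \<mu>"
  shows "mexp A $ i $ j = (\<Sum>b\<in>B. b $ i * b $ j * exp (\<mu> b))"
proof -
  let ?M = "\<chi> i j. \<Sum>b\<in>B. b $ i * b $ j * exp (\<mu> b)"
  have "(\<lambda>k. (1 / fact k) *\<^sub>R matpow A k) sums ?M"
    unfolding sums_def
  proof (intro vec_tendstoI)
    fix i j
    have "(\<Sum>k<n. (1 / fact k) *\<^sub>R matpow A k) $ i $ j
        = (\<Sum>b\<in>B. b $ i * b $ j * (\<Sum>k<n. \<mu> b ^ k / fact k))" for n
      by (simp add: matpow_entry_eigenbasis[OF basis] sum_distrib_left sum_distrib_right
          sum.swap[of _ "{..<n}"] mult_ac)
    moreover have "(\<lambda>n. \<Sum>k<n. \<mu> b ^ k / fact k) \<longlonglongrightarrow> exp (\<mu> b)" for b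
      using exp_converges[of "\<mu> b"] by (simp add: sums_def divide_inverse mult.commute)
    ultimately show "(\<lambda>n. (\<Sum>k<n. (1 / fact k) *\<^sub>R matpow A k) $ i $ j) \<longlonglongrightarrow> ?M $ i $ j"
      by (auto intro!: tendsto_intros)
  qed
  thus ?thesis unfolding mexp_def by (simp add: sums_unique[symmetric])
qed

lemma tendsto_mexp_neg_square_entry:
  assumes basis: "orthonormal_eigenbasis A B \<mu>"
  shows "((\<lambda>t. mexp ((- t) *\<^sub>R (A ** A)) $ i $ j)
           \<longlongrightarrow> (\<Sum>b\<in>{b\<in>B. \<mu> b = 0}. b $ i * b $ j)) at_top"
proof -
  have fin: "finite B" using basis unfolding orthonormal_eigenbasis_def by simp
  have decay: "((\<lambda>t. exp (- t * (\<mu> b)\<^sup>2)) \<longlongrightarrow> (if \<mu> b = 0 then 1 else 0)) at_top" for b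
  proof (cases "\<mu> b = 0")
    case False
    hence "filterlim (\<lambda>t. (\<mu> b)\<^sup>2 * t) at_top at_top"
      by (intro filterlim_tendsto_pos_mult_at_top[OF tendsto_const _ filterlim_ident]) simp
    hence "filterlim (\<lambda>t. - t * (\<mu> b)\<^sup>2) at_bot at_top"
      by (simp add: filterlim_uminus_at_bot mult.commute)
    with False show ?thesis by (simp add: filterlim_compose[OF exp_at_bot])
  qed simp
  have "((\<lambda>t. \<Sum>b\<in>B. b $ i * b $ j * exp (- t * (\<mu> b)\<^sup>2)) \<longlongrightarrow>
      (\<Sum>b\<in>B. b $ i * b $ j * (if \<mu> b = 0 then 1 else 0))) at_top"
    by (intro tendsto_intros decay)
  thus ?thesis
    unfolding mexp_entry_eigenbasis[OF orthonormal_eigenbasis_scaled_square[OF basis]]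
    by (simp add: sum.inter_filter[OF fin] if_distrib cong: if_cong)
qed

lemma eventually_mexp_neg_square_positive:
  fixes A :: "real^'n^'n"
  assumes sym: "transpose A = A" and one: "A *v (\<chi> i. 1) = 0"
    and kernel_const: "\<And>x i j. A *v x = 0 \<Longrightarrow> x $ i = x $ j"
  shows "\<forall>\<^sub>F t in at_top. \<forall>i j. mexp ((- t) *\<^sub>R (A ** A)) $ i $ j > 0"
proof -
  obtain B \<mu> where basis: "orthonormal_eigenbasis A B \<mu>"
    using symmetric_matrix_orthonormal_eigenbasis[OF sym] by blast
  have const: "b $ i = b $ j" if "b \<in> B" "\<mu> b = 0" for b i j
    using basis that kernel_const unfolding orthonormal_eigenbasis_def by simp
  have "(\<chi> i. 1) \<noteq> (0 :: real^'n)" by (simp add: vec_eq_iff)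
  then obtain b0 where b0: "b0 \<in> B" "\<mu> b0 = 0"
    using orthonormal_eigenbasis_kernel[OF basis one] by blast
  have "b0 $ i \<noteq> 0" for i
  proof
    assume "b0 $ i = 0"
    hence "b0 = 0" using const[OF b0] by (simp add: vec_eq_iff) metis
    moreover have "norm b0 = 1" using basis b0(1) unfolding orthonormal_eigenbasis_def by simp
    ultimately show False by simp
  qed
  hence "(\<Sum>b\<in>{b\<in>B. \<mu> b = 0}. b $ i * b $ j) > 0" for i j
    using basis b0 const[of _ j i]
    by (intro sum_pos2[of _ b0]) (auto simp: orthonormal_eigenbasis_def zero_less_mult_iff
        linorder_neq_iff)
  hence "\<forall>\<^sub>F t in at_top. mexp ((- t) *\<^sub>R (A ** A)) $ i $ j > 0" for i j
    using order_tendstoD(1)[OF tendsto_mexp_neg_square_entry[OF basis]] by blast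
  thus ?thesis by (intro eventually_all_finite) blast
qed

lemma positive_matrix_mult_nonneg_positive:
  fixes M :: "real^'n^'m"
  assumes "\<And>i j. M $ i $ j > 0" and "\<And>j. f $ j \<ge> 0" and "f \<noteq> 0"
  shows "(M *v f) $ i > 0"
proof -
  obtain w where "f $ w \<noteq> 0" using \<open>f \<noteq> 0\<close> by (auto simp: vec_eq_iff)
  hence "M $ i $ w * f $ w > 0" using assms(1)[of i w] assms(2)[of w] by simp
  moreover have "M $ i $ j * f $ j \<ge> 0" for j using assms(1)[of i j] assms(2)[of j] by simp
  ultimately show ?thesis unfolding matrix_vector_mult_def by (simp add: sum_pos2[of _ w])
qed

lemma laplacian_transpose: "transpose (laplacian E ini ter) = laplacian E ini ter"
  by (simp add: laplacian_def transpose_def mult.commute vec_eq_iff)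

lemma orientation_ini_ne_ter:
  assumes "simple_graph E" "orientation E ini ter" "e \<in> E"
  shows "ini e \<noteq> ter e"
proof
  assume "ini e = ter e"
  moreover have "e = {ini e, ter e}" using assms(2,3) unfolding orientation_def by blast
  ultimately have "e = {ini e}" by simp
  hence "card e = card {ini e}" by (rule arg_cong)
  moreover have "card e = 2" using assms(1,3) unfolding simple_graph_def by blast
  ultimately show False by simp
qed

lemma sum_incidence_mult:
  assumes "ini e \<noteq> ter e"
  shows "(\<Sum>w\<in>UNIV. incidence ini ter w e * x $ w) = x $ ter e - x $ ini e"
proof -
  have "(\<Sum>w\<in>UNIV. incidence ini ter w e * x $ w)
      = (\<Sum>w\<in>UNIV. (if w = ter e then x $ w else 0) - (if w = ini e then x $ w else 0))"
    using assms by (intro sum.cong) (auto simp: incidence_def)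
  thus ?thesis by (simp add: sum_subtractf)
qed

lemma laplacian_mult_vector:
  fixes x :: "real^'v::finite"
  assumes "simple_graph E" "orientation E ini ter"
  shows "(laplacian E ini ter *v x) $ u = (\<Sum>e\<in>E. incidence ini ter u e * (x $ ter e - x $ ini e))"
proof -
  have "(laplacian E ini ter *v x) $ u
      = (\<Sum>e\<in>E. incidence ini ter u e * (\<Sum>w\<in>UNIV. incidence ini ter w e * x $ w))"
    by (simp add: laplacian_def matrix_vector_mult_def sum_distrib_left sum_distrib_right
        sum.swap[of _ E] mult.assoc)
  also have "\<dots> = (\<Sum>e\<in>E. incidence ini ter u e * (x $ ter e - x $ ini e))"
    by (intro sum.cong refl) (simp add: sum_incidence_mult orientation_ini_ne_ter[OF assms])
  finally show ?thesis .
qed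

lemma inner_laplacian:
  fixes x :: "real^'v::finite"
  assumes "simple_graph E" "orientation E ini ter"
  shows "x \<bullet> (laplacian E ini ter *v x) = (\<Sum>e\<in>E. (x $ ter e - x $ ini e)\<^sup>2)"
proof -
  have "x \<bullet> (laplacian E ini ter *v x)
      = (\<Sum>e\<in>E. (x $ ter e - x $ ini e) * (\<Sum>u\<in>UNIV. incidence ini ter u e * x $ u))"
    by (simp add: inner_vec_def laplacian_mult_vector[OF assms] sum_distrib_left
        sum.swap[of _ UNIV] mult_ac)
  also have "\<dots> = (\<Sum>e\<in>E. (x $ ter e - x $ ini e)\<^sup>2)"
    by (intro sum.cong refl)
      (simp add: sum_incidence_mult orientation_ini_ne_ter[OF assms] power2_eq_square)
  finally show ?thesis .
qed

lemma laplacian_kernel_constant: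
  fixes x :: "real^'v::finite"
  assumes "simple_graph E" "graph_connected E" "orientation E ini ter"
    and "laplacian E ini ter *v x = 0"
  shows "x $ u = x $ w"
proof -
  have "(\<Sum>e\<in>E. (x $ ter e - x $ ini e)\<^sup>2) = 0"
    using inner_laplacian[OF assms(1,3), of x] assms(4) by simp
  hence "x $ ter e = x $ ini e" if "e \<in> E" for e
    using that sum_nonneg_eq_0_iff[of E "\<lambda>e. (x $ ter e - x $ ini e)\<^sup>2"] by simp
  hence edge: "x $ a = x $ b" if "{a, b} \<in> E" for a b
    using that assms(3) unfolding orientation_def by (metis doubleton_eq_iff)
  have "(\<lambda>a b. {a, b} \<in> E)\<^sup>*\<^sup>* u w" using assms(2) unfolding graph_connected_def by blast
  thus ?thesis by induction (auto dest: edge)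
qed

lemma laplacian_mult_one:
  assumes "simple_graph E" "orientation E ini ter"
  shows "laplacian E ini ter *v (\<chi> i. 1) = (0 :: real^'v::finite)"
  by (simp add: vec_eq_iff laplacian_mult_vector[OF assms])

theorem proposition6p1:
  fixes E :: "('v::finite) set set" and ini ter :: "'v set \<Rightarrow> 'v"
  assumes "simple_graph E" and "graph_connected E" and "orientation E ini ter"
  shows "\<exists>t0>0. \<forall>t\<ge>t0. \<forall>f :: real ^ 'v.
           (\<forall>v. f $ v \<ge> 0) \<and> f \<noteq> 0 \<longrightarrow>
           (\<forall>v. (mexp ((- t) *\<^sub>R (laplacian E ini ter ** laplacian E ini ter)) *v f) $ v > 0)"
proof -
  let ?L = "laplacian E ini ter"
  have "\<forall>\<^sub>F t in at_top. \<forall>i j. mexp ((- t) *\<^sub>R (?L ** ?L)) $ i $ j > 0"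
    using eventually_mexp_neg_square_positive[OF laplacian_transpose
        laplacian_mult_one[OF assms(1,3)]] laplacian_kernel_constant[OF assms] by blast
  then obtain T where T: "\<And>t. t \<ge> T \<Longrightarrow> \<forall>i j. mexp ((- t) *\<^sub>R (?L ** ?L)) $ i $ j > 0"
    unfolding eventually_at_top_linorder by blast
  show ?thesis
    by (intro exI[of _ "max T 1"])
      (auto simp del: scaleR_minus_left intro!: positive_matrix_mult_nonneg_positive T[rule_format])
qed

end
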